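(* Let $s,M,N\in\mathbb{N}$ with $N$ even, and let $f_1,\ldots,f_M\in L^2(\mathbb{R}^s)$ be linearly independent. Let $\mathcal{T}$ be the Euclidean space of tensors of order $N$ with dimension $M$ in each mode, and for $\mathcal{A}\in\mathcal{T}$ let $h(\mathcal{A})\in L^2((\mathbb{R}^s)^N)$ be the function $(\mathbf{x}_1,\ldots,\mathbf{x}_N)\mapsto\sum_{d_1,\ldots,d_N=1}^M\mathcal{A}_{d_1\ldots d_N}\prod_{i=1}^N f_{d_i}(\mathbf{x}_i)$. Let $\{\mathcal{A}^\lambda\}_{\lambda\in\Lambda}\subset\mathcal{T}$ be a family of tensors and $\mathcal{A}^*\in\mathcal{T}$ a tensor not in the family, such that $\operatorname{rank}([\mathcal{A}^\lambda])<\operatorname{rank}([\mathcal{A}^*])$ for all $\lambda\in\Lambda$. Then there exists $\epsilon>0$ such that for all $\lambda\in\Lambda$: $\int|h(\mathcal{A}^\lambda)-h(\mathcal{A}^* )|^2>\epsilon$.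
   Context: For an order-$N$ tensor $\mathcal{A}\in\mathbb{R}^{M_1\times\cdots\times M_N}$ ($N$ even), the matricization $[\mathcal{A}]$ is the matrix with $M_1M_3\cdots M_{N-1}$ rows and $M_2M_4\cdots M_N$ columns, whose rows are indexed by the odd modes and columns by the even modes: the entry $\mathcal{A}_{d_1\ldots d_N}$ is stored in row $1+\sum_{i=1}^{N/2}(d_{2i-1}-1)\prod_{j=i+1}^{N/2}M_{2j-1}$ and column $1+\sum_{i=1}^{N/2}(d_{2i}-1)\prod_{j=i+1}^{N/2}M_{2j}$. Linear independence of $f_1,\ldots,f_M$ is in the vector space $L^2(\mathbb{R}^s)$; the integral is over $(\mathbb{R}^s)^N$ with Lebesgue measure. *)

theory Defs
  imports "HOL-Probability.Probability" "Jordan_Normal_Form.DL_Rank"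
begin

text \<open>Modes and mode indices are
  0-based: a multi-index is an element of {..<N} ->E {..<M}.\<close>

definition tidx :: "nat \<Rightarrow> nat \<Rightarrow> (nat \<Rightarrow> nat) set" where
  "tidx N M = ({..<N} \<rightarrow>\<^sub>E {..<M})"

definition tensor_space :: "nat \<Rightarrow> nat \<Rightarrow> ((nat \<Rightarrow> nat) \<Rightarrow> real) set" where
  "tensor_space N M = {A. \<forall>d. d \<notin> tidx N M \<longrightarrow> A d = 0}"

text \<open>Matricization: rows indexed by the odd modes (1st, 3rd, ... i.e. 0-based modes 0,2,...),
  columns by the even modes, mixed radix with the first such mode most significant.\<close>

definition matricize :: "nat \<Rightarrow> nat \<Rightarrow> ((nat \<Rightarrow> nat) \<Rightarrow> real) \<Rightarrow> real mat" where
  "matricize N M A = (let K = N div 2 in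
     mat (M ^ K) (M ^ K) (\<lambda>(r, c). A (\<lambda>k. if k < N then
        (if even k then r div M ^ (K - 1 - k div 2) mod M
                   else c div M ^ (K - 1 - k div 2) mod M) else undefined)))"

definition mat_rank :: "real mat \<Rightarrow> nat" where
  "mat_rank A = vec_space.rank (dim_row A) A"

text \<open>The function h(A) on (R^s)^N, points represented as x :: nat \<Rightarrow> 'a.\<close>

definition tensor_fun :: "nat \<Rightarrow> nat \<Rightarrow> (nat \<Rightarrow> 'a \<Rightarrow> real) \<Rightarrow> ((nat \<Rightarrow> nat) \<Rightarrow> real)
    \<Rightarrow> (nat \<Rightarrow> 'a) \<Rightarrow> real" where
  "tensor_fun N M f A x = (\<Sum>d\<in>tidx N M. A d * (\<Prod>i<N. f (d i) (x i)))"

definition square_integrable :: "('a::euclidean_space \<Rightarrow> real) \<Rightarrow> bool" where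
  "square_integrable g \<longleftrightarrow> g \<in> borel_measurable lborel \<and> integrable lborel (\<lambda>x. (g x)\<^sup>2)"

text \<open>Linear independence of f_0,...,f_{M-1} as elements of L^2, i.e. modulo a.e. equality.\<close>

definition L2_lin_indep :: "nat \<Rightarrow> (nat \<Rightarrow> 'a::euclidean_space \<Rightarrow> real) \<Rightarrow> bool" where
  "L2_lin_indep M f \<longleftrightarrow>
     (\<forall>c :: nat \<Rightarrow> real. (AE x in lborel. (\<Sum>d<M. c d * f d x) = 0) \<longrightarrow> (\<forall>d<M. c d = 0))"

end

theory Submission
  imports Defs
begin

text \<open>Choose rank [A*] linearly independent columns of [A*]. A matrix
  B of smaller rank annihilates some nontrivial combination v of the same columns, so the Frobenius
  distance of B to [A*] is at least |[A*] v| / |v|, which is bounded below by a constant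
  \<delta> > 0 (a positive definite quadratic form attains a positive minimum on the unit sphere).
  On the function side, the products of the f d are linearly independent in L2, so their Gram
  matrix is positive definite and the integral of h(A)^2 is at least \<gamma> times the sum of
  squares of the entries of A. As h is linear and matricization only rearranges entries, the
  squared L2 distance of h(A^l) and h(A*) is at least \<gamma> \<delta>.\<close>

section \<open>Coercive quadratic forms\<close>

lemma quadratic_form_scale:
  fixes a :: "'i \<Rightarrow> 'i \<Rightarrow> real"
  shows "(\<Sum>i\<in>S. \<Sum>j\<in>S. a i j * (t * v i) * (t * v j)) = t\<^sup>2 * (\<Sum>i\<in>S. \<Sum>j\<in>S. a i j * v i * v j)"
  by (simp add: sum_distrib_left power2_eq_square mult_ac)

lemma compact_unit_sphere_supported:
  fixes S :: "'i set"
  assumes "finite S"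
  shows "compact {v :: 'i \<Rightarrow> real. (\<forall>i. i \<notin> S \<longrightarrow> v i = 0) \<and> (\<Sum>i\<in>S. (v i)\<^sup>2) = 1}"
proof -
  define B where "B i = (if i \<in> S then {-1..1} else {0::real})" for i
  have "compactin (product_topology (\<lambda>_. euclidean) UNIV) (PiE UNIV B)"
    by (subst compactin_PiE) (auto simp: B_def)
  then have "compact (PiE UNIV B)"
    by (simp add: euclidean_product_topology)
  moreover have "closed {v :: 'i \<Rightarrow> real. (\<Sum>i\<in>S. (v i)\<^sup>2) = 1}"
    by (intro closed_Collect_eq continuous_intros continuous_on_product_coordinates)
  moreover have "(\<forall>i. i \<notin> S \<longrightarrow> v i = 0) \<and> (\<Sum>i\<in>S. (v i)\<^sup>2) = 1 \<longleftrightarrow>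
      v \<in> PiE UNIV B \<and> (\<Sum>i\<in>S. (v i)\<^sup>2) = 1" for v
  proof -
    have "\<bar>v i\<bar> \<le> 1" if "(\<Sum>i\<in>S. (v i)\<^sup>2) = 1" "i \<in> S" for i
      using that member_le_sum[of i S "\<lambda>i. (v i)\<^sup>2"] assms abs_le_square_iff[of "v i" 1] by auto
    then show ?thesis
      by (auto simp: B_def abs_le_iff PiE_iff)
  qed
  ultimately show ?thesis
    by (simp add: compact_Int_closed Collect_conj_eq)
qed

text \<open>By homogeneity it suffices to bound the form on the unit sphere, which is compact.\<close>

lemma quadratic_form_coercive:
  fixes a :: "'i \<Rightarrow> 'i \<Rightarrow> real"
  assumes "finite S"
    and pos: "\<And>v. \<exists>i\<in>S. v i \<noteq> 0 \<Longrightarrow> (\<Sum>i\<in>S. \<Sum>j\<in>S. a i j * v i * v j) > 0"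
  shows "\<exists>c>0. \<forall>v. c * (\<Sum>i\<in>S. (v i)\<^sup>2) \<le> (\<Sum>i\<in>S. \<Sum>j\<in>S. a i j * v i * v j)"
proof (cases "S = {}")
  case True
  then show ?thesis by (intro exI[of _ 1]) simp
next
  case False
  then obtain i0 where "i0 \<in> S" by blast
  define q where "q v = (\<Sum>i\<in>S. \<Sum>j\<in>S. a i j * v i * v j)" for v :: "'i \<Rightarrow> real"
  define K where "K = {v :: 'i \<Rightarrow> real. (\<forall>i. i \<notin> S \<longrightarrow> v i = 0) \<and> (\<Sum>i\<in>S. (v i)\<^sup>2) = 1}"
  have "(\<Sum>i\<in>S. (if i = i0 then 1 else 0 :: real)\<^sup>2) = (\<Sum>i\<in>S. if i = i0 then 1 else 0)"
    by (intro sum.cong) auto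
  then have "(\<lambda>i. if i = i0 then 1 else 0) \<in> K"
    using \<open>i0 \<in> S\<close> assms(1) by (simp add: K_def)
  moreover have "compact K"
    unfolding K_def using assms(1) by (rule compact_unit_sphere_supported)
  moreover have "continuous_on K q"
    unfolding q_def by (intro continuous_intros continuous_on_subset[OF continuous_on_product_coordinates]) auto
  ultimately obtain w where "w \<in> K" and w_min: "\<And>u. u \<in> K \<Longrightarrow> q w \<le> q u"
    using continuous_attains_inf[of K q] by blast
  have "\<exists>i\<in>S. w i \<noteq> 0"
  proof (rule ccontr)
    assume "\<not> ?thesis"
    then have "(\<Sum>i\<in>S. (w i)\<^sup>2) = 0" by simp
    with \<open>w \<in> K\<close> show False by (simp add: K_def)
  qed
  then have "q w > 0"
    unfolding q_def by (rule pos)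
  have "q w * (\<Sum>i\<in>S. (v i)\<^sup>2) \<le> q v" for v
  proof (cases "\<exists>i\<in>S. v i \<noteq> 0")
    case False
    then show ?thesis by (simp add: q_def)
  next
    case True
    define n where "n = (\<Sum>i\<in>S. (v i)\<^sup>2)"
    have "n > 0"
      using True assms(1) by (auto simp: n_def intro!: sum_pos2)
    define u where "u i = (if i \<in> S then v i / sqrt n else 0)" for i
    have scale: "(1 / sqrt n)\<^sup>2 = 1 / n"
      using \<open>n > 0\<close> by (simp add: power_divide)
    have "q u = q (\<lambda>i. 1 / sqrt n * v i)"
      unfolding q_def by (intro sum.cong) (auto simp: u_def)
    also have "\<dots> = q v / n"
      unfolding q_def quadratic_form_scale scale by simp
    finally have "q u = q v / n" .
    moreover have "(\<Sum>i\<in>S. (u i)\<^sup>2) = (1 / sqrt n)\<^sup>2 * (\<Sum>i\<in>S. (v i)\<^sup>2)"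
      unfolding sum_distrib_left by (intro sum.cong) (auto simp: u_def power_divide)
    then have "u \<in> K"
      using \<open>n > 0\<close> by (simp add: K_def u_def scale n_def[symmetric])
    ultimately show ?thesis
      using w_min[of u] \<open>n > 0\<close> by (simp add: n_def field_simps)
  qed
  with \<open>q w > 0\<close> show ?thesis
    unfolding q_def by blast
qed

section \<open>Distance to matrices of lower rank\<close>

lemma (in vec_space) exists_indep_cols_card_rank:
  assumes "C \<in> carrier_mat n nc"
  shows "\<exists>J\<subseteq>{..<nc}. card J = rank C \<and> inj_on (col C) J \<and> lin_indpt (col C ` J)"
proof -
  have "lin_indpt {}"
    by (simp add: lin_dep_def)
  then obtain S where "finite S" and S_max: "maximal S (\<lambda>T. T \<subseteq> set (cols C) \<and> lin_indpt T)"
    using maximal_exists_superset[of "set (cols C)" "\<lambda>T. T \<subseteq> set (cols C) \<and> lin_indpt T" "{}"]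
    by auto
  have "set (cols C) = col C ` {..<nc}"
    using assms by (auto simp: cols_def)
  then have "S \<subseteq> col C ` {..<nc}" and "lin_indpt S"
    using S_max unfolding maximal_def by auto
  then obtain J where J: "J \<subseteq> {..<nc}" "inj_on (col C) J" "S = col C ` J"
    by (auto simp: subset_image_inj)
  moreover have "rank C = card S"
    by (rule rank_card_indpt[OF assms S_max])
  ultimately show ?thesis
    using \<open>lin_indpt S\<close> card_image[OF J(2)] by (intro exI[of _ J]) auto
qed

lemma (in vec_space) lincomb_cols_index:
  assumes "B \<in> carrier_mat n nc" "J \<subseteq> {..<nc}" "inj_on (col B) J" "i < n"
  shows "lincomb b (col B ` J) $ i = (\<Sum>j\<in>J. b (col B j) * B $$ (i, j))"
proof -
  have "col B ` J \<subseteq> carrier_vec n"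
    using assms(1) by auto
  then have "lincomb b (col B ` J) $ i = (\<Sum>t\<in>col B ` J. b t * t $ i)"
    by (rule lincomb_index[OF assms(4)])
  also have "\<dots> = (\<Sum>j\<in>J. b (col B j) * col B j $ i)"
    by (rule sum.reindex[OF assms(3), unfolded comp_def])
  also have "\<dots> = (\<Sum>j\<in>J. b (col B j) * B $$ (i, j))"
    using assms by (intro sum.cong) auto
  finally show ?thesis .
qed

lemma (in vec_space) cols_relation_if_rank_less_card:
  assumes B: "B \<in> carrier_mat n nc" and J: "J \<subseteq> {..<nc}" and rank_less: "rank B < card J"
  shows "\<exists>v. (\<exists>j\<in>J. v j \<noteq> 0) \<and> (\<forall>i<n. (\<Sum>j\<in>J. v j * B $$ (i, j)) = 0)"
proof (cases "inj_on (col B) J")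
  case False
  then obtain j1 j2 where j: "j1 \<in> J" "j2 \<in> J" "j1 \<noteq> j2" "col B j1 = col B j2"
    by (auto simp: inj_on_def)
  define v where "v j = (if j = j1 then 1 else if j = j2 then -1 else (0 :: 'a))" for j
  have "(\<Sum>j\<in>J. v j * B $$ (i, j)) = 0" if "i < n" for i
  proof -
    have "B $$ (i, j1) = B $$ (i, j2)"
      using j J B that by (metis col_def index_vec carrier_matD subsetD lessThan_iff)
    moreover have "(\<Sum>j\<in>J. v j * B $$ (i, j)) =
        (\<Sum>j\<in>J. (if j = j1 then B $$ (i, j) else 0) - (if j = j2 then B $$ (i, j) else 0))"
      using j(3) by (intro sum.cong) (auto simp: v_def)
    moreover have "finite J"
      using J finite_subset by blast
    ultimately show ?thesis
      using j by (simp add: sum_subtractf)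
  qed
  then show ?thesis
    using j by (auto simp: v_def intro!: exI[of _ v])
next
  case True
  define T where "T = col B ` J"
  have "finite T" "T \<subseteq> carrier_vec n"
    using J B finite_subset by (auto simp: T_def)
  have "lin_dep T"
  proof (rule ccontr)
    assume "lin_indpt T"
    then have "card T \<le> rank B"
      using J B by (intro rank_ge_card_indpt[OF B]) (auto simp: T_def cols_def)
    with rank_less show False
      using True by (simp add: T_def card_image)
  qed
  then obtain a t where "lincomb a T = 0\<^sub>v n" "t \<in> T" "a t \<noteq> 0"
    using finite_lin_dep[OF \<open>finite T\<close> _ \<open>T \<subseteq> carrier_vec n\<close>] by auto
  show ?thesis
  proof (intro exI[of _ "\<lambda>j. a (col B j)"] conjI allI impI)
    show "\<exists>j\<in>J. a (col B j) \<noteq> 0"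
      using \<open>t \<in> T\<close> \<open>a t \<noteq> 0\<close> by (auto simp: T_def)
    show "(\<Sum>j\<in>J. a (col B j) * B $$ (i, j)) = 0" if "i < n" for i
      using lincomb_cols_index[OF B J True that, where b = a] \<open>lincomb a T = 0\<^sub>v n\<close> that
      by (simp add: T_def)
  qed
qed

lemma (in vec_space) indep_cols_lincomb_nonzero:
  assumes C: "C \<in> carrier_mat n nc" and J: "J \<subseteq> {..<nc}" "inj_on (col C) J" "lin_indpt (col C ` J)"
    and v: "\<exists>j\<in>J. v j \<noteq> 0"
  shows "\<exists>i<n. (\<Sum>j\<in>J. v j * C $$ (i, j)) \<noteq> 0"
proof (rule ccontr)
  assume all_zero: "\<not> ?thesis"
  define b where "b t = v (the_inv_into J (col C) t)" for t
  have b_col: "b (col C j) = v j" if "j \<in> J" for j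
    using J(2) that by (simp add: b_def the_inv_into_f_f)
  have "lincomb b (col C ` J) = 0\<^sub>v n"
  proof (rule eq_vecI)
    have "col C ` J \<subseteq> carrier_vec n"
      using C by auto
    then show "dim_vec (lincomb b (col C ` J)) = dim_vec (0\<^sub>v n)"
      using J(1) finite_subset by (simp add: lincomb_dim)
    show "lincomb b (col C ` J) $ i = 0\<^sub>v n $ i" if "i < dim_vec (0\<^sub>v n)" for i
      using that all_zero b_col by (simp add: lincomb_cols_index[OF C J(1,2)] cong: sum.cong)
  qed
  moreover obtain j where "j \<in> J" "v j \<noteq> 0"
    using v by blast
  ultimately have "lin_dep (col C ` J)"
    unfolding lin_dep_def using J(1) finite_subset b_col
    by (intro exI[of _ "col C ` J"] exI[of _ b] exI[of _ "col C j"]) auto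
  with J(3) show False by blast
qed

text \<open>Pick rank C independent columns of C. A matrix B of smaller rank has a nontrivial
  relation v among the same columns; applying v to C - B then gives the vector C v, whose
  norm is bounded below by coercivity of the Gram form of these columns, and above by
  Cauchy-Schwarz in terms of the distance of B to C.\<close>

lemma sum_sq_dist_rank_less_bounded_below:
  fixes C :: "real mat"
  assumes C: "C \<in> carrier_mat n nc"
  shows "\<exists>\<delta>>0. \<forall>B\<in>carrier_mat n nc. vec_space.rank n B < vec_space.rank n C \<longrightarrow>
            \<delta> \<le> (\<Sum>i<n. \<Sum>j<nc. (C $$ (i, j) - B $$ (i, j))\<^sup>2)"
proof -
  obtain J where J: "J \<subseteq> {..<nc}" "card J = vec_space.rank n C" "inj_on (col C) J"
      "module.lin_indpt class_ring (module_vec TYPE(real) n) (col C ` J)"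
    using vec_space.exists_indep_cols_card_rank[OF C] by blast
  have "finite J"
    using J(1) finite_subset by blast
  define a where "a j k = (\<Sum>i<n. C $$ (i, j) * C $$ (i, k))" for j k
  have gram: "(\<Sum>j\<in>J. \<Sum>k\<in>J. a j k * v j * v k) = (\<Sum>i<n. (\<Sum>j\<in>J. v j * C $$ (i, j))\<^sup>2)" for v
  proof -
    have "(\<Sum>j\<in>J. \<Sum>k\<in>J. a j k * v j * v k) =
        (\<Sum>j\<in>J. \<Sum>k\<in>J. \<Sum>i<n. (v j * C $$ (i, j)) * (v k * C $$ (i, k)))"
      by (simp add: a_def sum_distrib_left sum_distrib_right mult_ac)
    also have "\<dots> = (\<Sum>i<n. \<Sum>j\<in>J. \<Sum>k\<in>J. (v j * C $$ (i, j)) * (v k * C $$ (i, k)))"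
      by (simp add: sum.swap[of _ J "{..<n}"])
    also have "\<dots> = (\<Sum>i<n. (\<Sum>j\<in>J. v j * C $$ (i, j))\<^sup>2)"
      by (simp add: power2_eq_square sum_product)
    finally show ?thesis .
  qed
  have "(\<Sum>j\<in>J. \<Sum>k\<in>J. a j k * v j * v k) > 0" if v: "\<exists>j\<in>J. v j \<noteq> 0" for v
  proof -
    obtain i where "i < n" "(\<Sum>j\<in>J. v j * C $$ (i, j)) \<noteq> 0"
      using vec_space.indep_cols_lincomb_nonzero[OF C J(1,3,4) v] by blast
    then have "0 < (\<Sum>i<n. (\<Sum>j\<in>J. v j * C $$ (i, j))\<^sup>2)"
      by (intro sum_pos2[of _ i]) auto
    then show ?thesis
      by (simp add: gram)
  qed
  then obtain c where "c > 0"
    and c: "\<And>v. c * (\<Sum>j\<in>J. (v j)\<^sup>2) \<le> (\<Sum>i<n. (\<Sum>j\<in>J. v j * C $$ (i, j))\<^sup>2)"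
    using quadratic_form_coercive[OF \<open>finite J\<close>, of a] by (auto simp: gram)
  have "c \<le> (\<Sum>i<n. \<Sum>j<nc. (C $$ (i, j) - B $$ (i, j))\<^sup>2)"
    if B: "B \<in> carrier_mat n nc" and rank_less: "vec_space.rank n B < vec_space.rank n C" for B
  proof -
    obtain v where "\<exists>j\<in>J. v j \<noteq> 0" and Bv: "\<And>i. i < n \<Longrightarrow> (\<Sum>j\<in>J. v j * B $$ (i, j)) = 0"
      using vec_space.cols_relation_if_rank_less_card[OF B J(1)] rank_less J(2) by auto
    define nv where "nv = (\<Sum>j\<in>J. (v j)\<^sup>2)"
    have "nv > 0"
      unfolding nv_def using \<open>\<exists>j\<in>J. v j \<noteq> 0\<close> \<open>finite J\<close> by (auto intro!: sum_pos2)
    have "c * nv \<le> (\<Sum>i<n. (\<Sum>j\<in>J. v j * C $$ (i, j))\<^sup>2)"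
      unfolding nv_def by (rule c)
    also have "\<dots> = (\<Sum>i<n. (\<Sum>j\<in>J. v j * (C $$ (i, j) - B $$ (i, j)))\<^sup>2)"
      using Bv by (simp add: right_diff_distrib sum_subtractf)
    also have "\<dots> \<le> (\<Sum>i<n. nv * (\<Sum>j\<in>J. (C $$ (i, j) - B $$ (i, j))\<^sup>2))"
      unfolding nv_def by (intro sum_mono Cauchy_Schwarz_ineq_sum)
    also have "\<dots> \<le> (\<Sum>i<n. nv * (\<Sum>j<nc. (C $$ (i, j) - B $$ (i, j))\<^sup>2))"
      using \<open>nv > 0\<close> J(1) by (intro sum_mono mult_left_mono sum_mono2) auto
    also have "\<dots> = nv * (\<Sum>i<n. \<Sum>j<nc. (C $$ (i, j) - B $$ (i, j))\<^sup>2)"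
      by (simp add: sum_distrib_left)
    finally show ?thesis
      using \<open>nv > 0\<close> by simp
  qed
  with \<open>c > 0\<close> show ?thesis
    by blast
qed

section \<open>Tensor functions\<close>

lemma finite_tidx: "finite (tidx N M)"
  unfolding tidx_def by (simp add: finite_PiE)

lemma tensor_fun_diff:
  "tensor_fun N M f (\<lambda>d. A d - B d) x = tensor_fun N M f A x - tensor_fun N M f B x"
  by (simp add: tensor_fun_def sum_subtractf left_diff_distrib)

lemma tensor_fun_measurable:
  assumes "\<And>a. a < M \<Longrightarrow> f a \<in> borel_measurable lborel"
  shows "tensor_fun N M f v \<in> borel_measurable (Pi\<^sub>M {..<N} (\<lambda>_. lborel :: 'a::euclidean_space measure))"
  unfolding tensor_fun_def
proof (intro borel_measurable_sum borel_measurable_times borel_measurable_prod borel_measurable_const)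
  fix d i assume "d \<in> tidx N M" "i \<in> {..<N}"
  then have "f (d i) \<in> borel_measurable lborel"
    by (intro assms) (auto simp: tidx_def)
  moreover have "(\<lambda>x. x i) \<in> measurable (Pi\<^sub>M {..<N} (\<lambda>_. lborel :: 'a measure)) lborel"
    using \<open>i \<in> {..<N}\<close> by (intro measurable_component_singleton)
  ultimately show "(\<lambda>x. f (d i) (x i)) \<in> borel_measurable (Pi\<^sub>M {..<N} (\<lambda>_. lborel))"
    by (rule measurable_compose[rotated])
qed

lemma tensor_fun_Suc:
  "tensor_fun (Suc N) M f v (x(N := y)) = (\<Sum>a<M. tensor_fun N M f (\<lambda>d. v (d(N := a))) x * f a y)"
proof -
  have tidx_Suc: "tidx (Suc N) M = (\<lambda>(a, g). g(N := a)) ` ({..<M} \<times> tidx N M)"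
    unfolding tidx_def lessThan_Suc by (rule PiE_insert_eq)
  have inj: "inj_on (\<lambda>(a, g). g(N := a)) ({..<M} \<times> tidx N M)"
    unfolding tidx_def by (rule inj_combinator) simp
  have "tensor_fun (Suc N) M f v (x(N := y)) =
      (\<Sum>(a, g)\<in>{..<M} \<times> tidx N M. v (g(N := a)) * (\<Prod>i<Suc N. f ((g(N := a)) i) ((x(N := y)) i)))"
    unfolding tensor_fun_def tidx_Suc by (subst sum.reindex[OF inj]) (simp add: case_prod_beta')
  also have "\<dots> = (\<Sum>(a, g)\<in>{..<M} \<times> tidx N M. v (g(N := a)) * (\<Prod>i<N. f (g i) (x i)) * f a y)"
    by (intro sum.cong refl) (auto simp: lessThan_Suc mult_ac intro!: prod.cong)
  also have "\<dots> = (\<Sum>a<M. tensor_fun N M f (\<lambda>d. v (d(N := a))) x * f a y)"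
    by (simp add: sum.cartesian_product[symmetric] tensor_fun_def sum_distrib_right)
  finally show ?thesis .
qed

lemma (in product_sigma_finite) AE_PiM_insert:
  assumes "finite I" "i \<notin> I"
    and [measurable]: "Measurable.pred (Pi\<^sub>M (insert i I) M) P"
    and "AE x in Pi\<^sub>M (insert i I) M. P x"
  shows "AE x in Pi\<^sub>M I M. AE y in M i. P (x(i := y))"
proof -
  define g where "g x = (if P x then 0 else 1 :: ennreal)" for x
  have g_meas [measurable]: "g \<in> borel_measurable (Pi\<^sub>M (insert i I) M)"
    unfolding g_def by measurable
  have "integral\<^sup>N (Pi\<^sub>M (insert i I) M) g = 0"
    using assms(4) by (subst nn_integral_0_iff_AE) (auto simp: g_def)
  then have "(\<integral>\<^sup>+ x. (\<integral>\<^sup>+ y. g (x(i := y)) \<partial>M i) \<partial>Pi\<^sub>M I M) = 0"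
    by (simp add: product_nn_integral_insert[OF assms(1,2) g_meas])
  moreover have "(\<lambda>x. \<integral>\<^sup>+ y. g (x(i := y)) \<partial>M i) \<in> borel_measurable (Pi\<^sub>M I M)"
    using assms(1,2) by measurable
  ultimately have "AE x in Pi\<^sub>M I M. (\<integral>\<^sup>+ y. g (x(i := y)) \<partial>M i) = 0"
    by (simp add: nn_integral_0_iff_AE)
  with AE_space show ?thesis
  proof eventually_elim
    case (elim x)
    have "(\<lambda>y. g (x(i := y))) \<in> borel_measurable (M i)"
      using measurable_comp[OF measurable_component_update g_meas, OF elim(1) assms(2)]
      by (simp add: comp_def fun_upd_def)
    with elim(2) have "AE y in M i. g (x(i := y)) = 0"
      by (simp add: nn_integral_0_iff_AE)
    then show ?case
      by eventually_elim (simp add: g_def split: if_splits)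
  qed
qed

text \<open>Linear independence of the f a passes to their tensor products: integrate out the last
  variable (Fubini) and apply the independence hypothesis to the resulting slices.\<close>

lemma tensor_fun_AE_zero_imp_zero:
  assumes meas: "\<And>a. a < M \<Longrightarrow> f a \<in> borel_measurable lborel" and li: "L2_lin_indep M f"
  shows "AE x in Pi\<^sub>M {..<N} (\<lambda>_. lborel :: 'a::euclidean_space measure). tensor_fun N M f v x = 0
    \<Longrightarrow> d \<in> tidx N M \<Longrightarrow> v d = 0"
proof (induction N arbitrary: v d)
  case 0
  have "tensor_fun 0 M f v x = v (\<lambda>_. undefined)" for x
    by (simp add: tensor_fun_def tidx_def)
  moreover have "AE x in count_space {\<lambda>_. undefined}. tensor_fun 0 M f v x = 0"
    using 0 by (simp only: lessThan_0 PiM_empty)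
  ultimately show ?case
    using 0 by (simp add: AE_count_space tidx_def)
next
  case (Suc n)
  interpret product_sigma_finite "\<lambda>_::nat. lborel :: 'a measure"
    by standard
  have "tensor_fun (Suc n) M f v \<in> borel_measurable (Pi\<^sub>M (insert n {..<n}) (\<lambda>_. lborel))"
    using tensor_fun_measurable[where f = f and M = M and N = "Suc n" and v = v, OF meas]
    by (simp only: lessThan_Suc)
  then have "Measurable.pred (Pi\<^sub>M (insert n {..<n}) (\<lambda>_. lborel)) (\<lambda>x. tensor_fun (Suc n) M f v x = 0)"
    by (rule pred_eq_const1) (intro borel_singleton sets.empty_sets)
  moreover have "AE x in Pi\<^sub>M (insert n {..<n}) (\<lambda>_. lborel). tensor_fun (Suc n) M f v x = 0"
    using Suc.prems(1) by (simp only: lessThan_Suc)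
  ultimately have "AE x in Pi\<^sub>M {..<n} (\<lambda>_. lborel). AE y in lborel. tensor_fun (Suc n) M f v (x(n := y)) = 0"
    by (rule AE_PiM_insert[rotated 2]) simp_all
  then have slices: "AE x in Pi\<^sub>M {..<n} (\<lambda>_. lborel). \<forall>a<M. tensor_fun n M f (\<lambda>e. v (e(n := a))) x = 0"
  proof eventually_elim
    case (elim x)
    then have "AE y in lborel. (\<Sum>a<M. tensor_fun n M f (\<lambda>e. v (e(n := a))) x * f a y) = 0"
      by (simp add: tensor_fun_Suc)
    then show ?case
      using li[unfolded L2_lin_indep_def, rule_format, of "\<lambda>a. tensor_fun n M f (\<lambda>e. v (e(n := a))) x"]
      by blast
  qed
  have "d(n := undefined) \<in> tidx n M" "d n < M"
    using Suc.prems(2) by (auto simp: tidx_def PiE_def Pi_def extensional_def)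
  have "AE x in Pi\<^sub>M {..<n} (\<lambda>_. lborel). tensor_fun n M f (\<lambda>e. v (e(n := d n))) x = 0"
    using slices by eventually_elim (use \<open>d n < M\<close> in blast)
  then have "v ((d(n := undefined))(n := d n)) = 0"
    by (rule Suc.IH[of "\<lambda>e. v (e(n := d n))" "d(n := undefined)", OF _ \<open>d(n := undefined) \<in> tidx n M\<close>])
  then show ?case
    by simp
qed

lemma integrable_mult_square_integrable:
  assumes "square_integrable g" "square_integrable h"
  shows "integrable lborel (\<lambda>y. g y * h y)"
proof (rule Bochner_Integration.integrable_bound)
  show "integrable lborel (\<lambda>y. (g y)\<^sup>2 + (h y)\<^sup>2)"
    using assms by (auto simp: square_integrable_def)
  show "(\<lambda>y. g y * h y) \<in> borel_measurable lborel"
    using assms by (auto simp: square_integrable_def)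
  have "\<bar>g y * h y\<bar> \<le> (g y)\<^sup>2 + (h y)\<^sup>2" for y
  proof -
    have "2 * (\<bar>g y\<bar> * \<bar>h y\<bar>) \<le> \<bar>g y\<bar>\<^sup>2 + \<bar>h y\<bar>\<^sup>2"
      using sum_squares_bound[of "\<bar>g y\<bar>" "\<bar>h y\<bar>"] by (simp add: mult.assoc)
    then show ?thesis
      using abs_ge_zero[of "g y * h y"] unfolding abs_mult power2_abs by linarith
  qed
  then show "AE y in lborel. norm (g y * h y) \<le> norm ((g y)\<^sup>2 + (h y)\<^sup>2)"
    by simp
qed

definition product_gram :: "nat \<Rightarrow> (nat \<Rightarrow> 'a::euclidean_space \<Rightarrow> real) \<Rightarrow> (nat \<Rightarrow> nat) \<Rightarrow> (nat \<Rightarrow> nat) \<Rightarrow> real"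
  where "product_gram N f d e =
    (\<integral>x. (\<Prod>i<N. f (d i) (x i) * f (e i) (x i)) \<partial>Pi\<^sub>M {..<N} (\<lambda>_. lborel))"

lemma integrable_product_gram:
  assumes "\<And>a. a < M \<Longrightarrow> square_integrable (f a)" "d \<in> tidx N M" "e \<in> tidx N M"
  shows "integrable (Pi\<^sub>M {..<N} (\<lambda>_. lborel :: 'a::euclidean_space measure))
    (\<lambda>x. \<Prod>i<N. f (d i) (x i) * f (e i) (x i))"
proof -
  interpret product_sigma_finite "\<lambda>_::nat. lborel :: 'a measure"
    by standard
  have "integrable (Pi\<^sub>M {..<N} (\<lambda>_. lborel))
      (\<lambda>x. \<Prod>i\<in>{..<N}. (\<lambda>i y. f (d i) y * f (e i) y) i (x i))"
    using assms by (intro product_integrable_prod integrable_mult_square_integrable) (auto simp: tidx_def)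
  then show ?thesis
    by simp
qed

lemma tensor_fun_square:
  "(tensor_fun N M f v x)\<^sup>2 =
    (\<Sum>d\<in>tidx N M. \<Sum>e\<in>tidx N M. v d * v e * (\<Prod>i<N. f (d i) (x i) * f (e i) (x i)))"
  by (simp add: tensor_fun_def power2_eq_square sum_product prod.distrib mult_ac)

lemma integral_tensor_fun_square:
  fixes N :: nat
  assumes "\<And>a. a < M \<Longrightarrow> square_integrable (f a)"
  defines "P \<equiv> Pi\<^sub>M {..<N} (\<lambda>_. lborel :: 'a::euclidean_space measure)"
  shows "integrable P (\<lambda>x. (tensor_fun N M f v x)\<^sup>2)"
    and "(\<integral>x. (tensor_fun N M f v x)\<^sup>2 \<partial>P) =
      (\<Sum>d\<in>tidx N M. \<Sum>e\<in>tidx N M. product_gram N f d e * v d * v e)"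
proof -
  have terms: "integrable P (\<lambda>x. v d * v e * (\<Prod>i<N. f (d i) (x i) * f (e i) (x i)))"
    if "d \<in> tidx N M" "e \<in> tidx N M" for d e
    unfolding P_def by (intro Bochner_Integration.integrable_mult_right integrable_product_gram[OF assms(1) that])
  then show "integrable P (\<lambda>x. (tensor_fun N M f v x)\<^sup>2)"
    unfolding tensor_fun_square by (intro Bochner_Integration.integrable_sum)
  have "(\<integral>x. (tensor_fun N M f v x)\<^sup>2 \<partial>P) = (\<Sum>d\<in>tidx N M. \<Sum>e\<in>tidx N M.
      \<integral>x. v d * v e * (\<Prod>i<N. f (d i) (x i) * f (e i) (x i)) \<partial>P)"
    unfolding tensor_fun_square using terms
    by (subst Bochner_Integration.integral_sum)
      (auto intro!: sum.cong Bochner_Integration.integral_sum Bochner_Integration.integrable_sum)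
  also have "\<dots> = (\<Sum>d\<in>tidx N M. \<Sum>e\<in>tidx N M. product_gram N f d e * v d * v e)"
    by (simp add: product_gram_def P_def mult_ac)
  finally show "(\<integral>x. (tensor_fun N M f v x)\<^sup>2 \<partial>P) =
      (\<Sum>d\<in>tidx N M. \<Sum>e\<in>tidx N M. product_gram N f d e * v d * v e)" .
qed

lemma integral_tensor_fun_square_coercive:
  assumes sq: "\<And>a. a < M \<Longrightarrow> square_integrable (f a)" and li: "L2_lin_indep M f"
  shows "\<exists>c>0. \<forall>v. c * (\<Sum>d\<in>tidx N M. (v d)\<^sup>2) \<le>
    (\<integral>x. (tensor_fun N M f v x)\<^sup>2 \<partial>Pi\<^sub>M {..<N} (\<lambda>_. lborel :: 'a::euclidean_space measure))"
proof -
  let ?P = "Pi\<^sub>M {..<N} (\<lambda>_. lborel :: 'a measure)"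
  have meas: "\<And>a. a < M \<Longrightarrow> f a \<in> borel_measurable lborel"
    using sq by (simp add: square_integrable_def)
  have "(\<Sum>d\<in>tidx N M. \<Sum>e\<in>tidx N M. product_gram N f d e * v d * v e) > 0"
    if v: "\<exists>d\<in>tidx N M. v d \<noteq> 0" for v
  proof -
    have "(\<integral>x. (tensor_fun N M f v x)\<^sup>2 \<partial>?P) \<noteq> 0"
    proof
      assume "(\<integral>x. (tensor_fun N M f v x)\<^sup>2 \<partial>?P) = 0"
      then have "AE x in ?P. tensor_fun N M f v x = 0"
        using integral_nonneg_eq_0_iff_AE[OF integral_tensor_fun_square(1)[OF sq]] by simp
      then show False
        using v tensor_fun_AE_zero_imp_zero[OF meas li] by blast
    qed
    moreover have "(\<integral>x. (tensor_fun N M f v x)\<^sup>2 \<partial>?P) \<ge> 0"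
      by simp
    ultimately show ?thesis
      by (simp add: integral_tensor_fun_square(2)[OF sq])
  qed
  then show ?thesis
    using quadratic_form_coercive[OF finite_tidx] by (simp add: integral_tensor_fun_square(2)[OF sq])
qed

section \<open>Matricization\<close>

lemma eq_if_base_digits_eq:
  fixes M K a b :: nat
  assumes "a < M ^ K" "b < M ^ K" "\<forall>p<K. a div M ^ p mod M = b div M ^ p mod M"
  shows "a = b"
  using assms
proof (induction K arbitrary: a b)
  case 0
  then show ?case by simp
next
  case (Suc K)
  have "M > 0"
    using Suc.prems(1) by (cases "M = 0") auto
  have "a div M < M ^ K" "b div M < M ^ K"
    using Suc.prems(1,2) \<open>M > 0\<close> by (auto simp: div_less_iff_less_mult mult.commute)
  moreover have "\<forall>p<K. a div M div M ^ p mod M = b div M div M ^ p mod M"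
  proof (intro allI impI)
    fix p
    assume "p < K"
    then have "a div M ^ Suc p mod M = b div M ^ Suc p mod M"
      using Suc.prems(3) by blast
    then show "a div M div M ^ p mod M = b div M div M ^ p mod M"
      by (simp add: div_mult2_eq)
  qed
  ultimately have "a div M = b div M"
    by (rule Suc.IH)
  moreover have "a mod M = b mod M"
    using Suc.prems(3) by (metis div_by_1 power_0 zero_less_Suc)
  ultimately show ?case
    by (metis div_mult_mod_eq)
qed

definition matricize_index :: "nat \<Rightarrow> nat \<Rightarrow> nat \<Rightarrow> nat \<Rightarrow> nat \<Rightarrow> nat" where
  "matricize_index N M r c = (\<lambda>k. if k < N then
     (if even k then r div M ^ (N div 2 - 1 - k div 2) mod M
                else c div M ^ (N div 2 - 1 - k div 2) mod M) else undefined)"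

lemma matricize_carrier: "matricize N M A \<in> carrier_mat (M ^ (N div 2)) (M ^ (N div 2))"
  by (simp add: matricize_def Let_def)

lemma mat_rank_matricize:
  "mat_rank (matricize N M A) = vec_space.rank (M ^ (N div 2)) (matricize N M A)"
  by (simp add: mat_rank_def matricize_def Let_def)

lemma matricize_index_nth:
  "r < M ^ (N div 2) \<Longrightarrow> c < M ^ (N div 2) \<Longrightarrow> matricize N M A $$ (r, c) = A (matricize_index N M r c)"
  by (simp add: matricize_def matricize_index_def Let_def)

lemma matricize_index_in_tidx:
  assumes "even N" "r < M ^ (N div 2)"
  shows "matricize_index N M r c \<in> tidx N M"
proof -
  have "M > 0" if "k < N" for k
  proof (rule ccontr)
    assume "\<not> M > 0"
    moreover have "N div 2 > 0"
      using assms(1) that by (auto elim: evenE)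
    ultimately show False
      using assms(2) by (simp add: zero_power)
  qed
  then show ?thesis
    by (auto simp: tidx_def matricize_index_def PiE_def extensional_def)
qed

text \<open>For even N the odd and even modes each carry all N div 2 base-M digits of the row and
  column index respectively, so distinct matrix positions give distinct multi-indices.\<close>

lemma inj_on_matricize_index:
  assumes "even N"
  shows "inj_on (\<lambda>(r, c). matricize_index N M r c) ({..<M ^ (N div 2)} \<times> {..<M ^ (N div 2)})"
proof (rule inj_onI, clarify)
  fix r c r' c'
  assume bounds: "r < M ^ (N div 2)" "c < M ^ (N div 2)" "r' < M ^ (N div 2)" "c' < M ^ (N div 2)"
    and eq: "matricize_index N M r c = matricize_index N M r' c'"
  have digits: "r div M ^ p mod M = r' div M ^ p mod M \<and> c div M ^ p mod M = c' div M ^ p mod M"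
    if "p < N div 2" for p
  proof -
    define k where "k = 2 * (N div 2 - 1 - p)"
    have k: "k < N" "even k" "N div 2 - 1 - k div 2 = p"
      "Suc k < N" "odd (Suc k)" "N div 2 - 1 - Suc k div 2 = p"
      using that assms by (auto simp: k_def)
    have "matricize_index N M r c k = matricize_index N M r' c' k"
      "matricize_index N M r c (Suc k) = matricize_index N M r' c' (Suc k)"
      using eq by simp_all
    then show ?thesis
      using k by (simp add: matricize_index_def)
  qed
  show "r = r' \<and> c = c'"
  proof
    show "r = r'"
      by (rule eq_if_base_digits_eq[of r M "N div 2" r']) (use bounds digits in auto)
    show "c = c'"
      by (rule eq_if_base_digits_eq[of c M "N div 2" c']) (use bounds digits in auto)
  qed
qed

lemma sum_sq_matricize_diff_le:
  assumes "even N"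
  shows "(\<Sum>r<M ^ (N div 2). \<Sum>c<M ^ (N div 2). (matricize N M A $$ (r, c) - matricize N M B $$ (r, c))\<^sup>2)
    \<le> (\<Sum>d\<in>tidx N M. (A d - B d)\<^sup>2)"
proof -
  let ?n = "M ^ (N div 2)" and ?idx = "\<lambda>(r, c). matricize_index N M r c"
  have "(\<Sum>r<?n. \<Sum>c<?n. (matricize N M A $$ (r, c) - matricize N M B $$ (r, c))\<^sup>2)
      = (\<Sum>(r, c)\<in>{..<?n} \<times> {..<?n}. (A (matricize_index N M r c) - B (matricize_index N M r c))\<^sup>2)"
    by (simp add: sum.cartesian_product matricize_index_nth)
  also have "\<dots> = (\<Sum>d\<in>?idx ` ({..<?n} \<times> {..<?n}). (A d - B d)\<^sup>2)"
    by (subst sum.reindex[OF inj_on_matricize_index[OF assms]]) (simp add: case_prod_beta')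
  also have "\<dots> \<le> (\<Sum>d\<in>tidx N M. (A d - B d)\<^sup>2)"
    using matricize_index_in_tidx[OF assms] by (intro sum_mono2 finite_tidx) auto
  finally show ?thesis .
qed

lemma integral_tensor_fun_diff_square_ge_matricize:
  assumes "even N" "\<And>a. a < M \<Longrightarrow> square_integrable (f a)" "L2_lin_indep M f"
  shows "\<exists>\<gamma>>0. \<forall>A B. \<gamma> * (\<Sum>r<M ^ (N div 2). \<Sum>c<M ^ (N div 2).
      (matricize N M A $$ (r, c) - matricize N M B $$ (r, c))\<^sup>2) \<le>
    (\<integral>x. (tensor_fun N M f A x - tensor_fun N M f B x)\<^sup>2
      \<partial>Pi\<^sub>M {..<N} (\<lambda>_. lborel :: 'a::euclidean_space measure))"
proof -
  obtain \<gamma> where "\<gamma> > 0" and \<gamma>: "\<And>v. \<gamma> * (\<Sum>d\<in>tidx N M. (v d)\<^sup>2) \<le>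
      (\<integral>x. (tensor_fun N M f v x)\<^sup>2 \<partial>Pi\<^sub>M {..<N} (\<lambda>_. lborel :: 'a measure))"
    using integral_tensor_fun_square_coercive[OF assms(2,3)] by blast
  have "\<gamma> * (\<Sum>r<M ^ (N div 2). \<Sum>c<M ^ (N div 2).
      (matricize N M A $$ (r, c) - matricize N M B $$ (r, c))\<^sup>2) \<le>
    (\<integral>x. (tensor_fun N M f A x - tensor_fun N M f B x)\<^sup>2 \<partial>Pi\<^sub>M {..<N} (\<lambda>_. lborel :: 'a measure))"
    for A B
  proof -
    have "\<gamma> * (\<Sum>r<M ^ (N div 2). \<Sum>c<M ^ (N div 2).
        (matricize N M A $$ (r, c) - matricize N M B $$ (r, c))\<^sup>2) \<le>
      \<gamma> * (\<Sum>d\<in>tidx N M. (A d - B d)\<^sup>2)"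
      using mult_left_mono[OF sum_sq_matricize_diff_le[OF assms(1)]] \<open>\<gamma> > 0\<close> by simp
    also have "\<dots> \<le> (\<integral>x. (tensor_fun N M f (\<lambda>d. A d - B d) x)\<^sup>2
        \<partial>Pi\<^sub>M {..<N} (\<lambda>_. lborel :: 'a measure))"
      by (rule \<gamma>)
    finally show ?thesis
      by (simp add: tensor_fun_diff)
  qed
  with \<open>\<gamma> > 0\<close> show ?thesis
    by blast
qed

theorem lemma3:
  fixes N M :: nat
    and f :: "nat \<Rightarrow> 'a::euclidean_space \<Rightarrow> real"
    and A :: "'l \<Rightarrow> (nat \<Rightarrow> nat) \<Rightarrow> real"
    and Astar :: "(nat \<Rightarrow> nat) \<Rightarrow> real"
  assumes "even N"
    and "\<And>d. d < M \<Longrightarrow> square_integrable (f d)"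
    and "L2_lin_indep M f"
    and "\<And>l. A l \<in> tensor_space N M"
    and "Astar \<in> tensor_space N M"
    and "Astar \<notin> range A"
    and "\<And>l. mat_rank (matricize N M (A l)) < mat_rank (matricize N M Astar)"
  shows "\<exists>\<epsilon>>0. \<forall>l. integral\<^sup>L (PiM {..<N} (\<lambda>_. lborel))
            (\<lambda>x. (tensor_fun N M f (A l) x - tensor_fun N M f Astar x)\<^sup>2) > \<epsilon>"
proof -
  let ?n = "M ^ (N div 2)"
  let ?dist = "\<lambda>l. \<integral>x. (tensor_fun N M f (A l) x - tensor_fun N M f Astar x)\<^sup>2 \<partial>Pi\<^sub>M {..<N} (\<lambda>_. lborel)"
  obtain \<delta> where "\<delta> > 0" and \<delta>: "\<forall>B\<in>carrier_mat ?n ?n.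
      vec_space.rank ?n B < vec_space.rank ?n (matricize N M Astar) \<longrightarrow>
      \<delta> \<le> (\<Sum>r<?n. \<Sum>c<?n. (matricize N M Astar $$ (r, c) - B $$ (r, c))\<^sup>2)"
    using sum_sq_dist_rank_less_bounded_below[OF matricize_carrier] by blast
  obtain \<gamma> where "\<gamma> > 0" and \<gamma>: "\<And>B C. \<gamma> * (\<Sum>r<?n. \<Sum>c<?n.
      (matricize N M B $$ (r, c) - matricize N M C $$ (r, c))\<^sup>2) \<le>
    (\<integral>x. (tensor_fun N M f B x - tensor_fun N M f C x)\<^sup>2 \<partial>Pi\<^sub>M {..<N} (\<lambda>_. lborel))"
    using integral_tensor_fun_diff_square_ge_matricize[OF assms(1-3)] by blast
  have "\<gamma> * \<delta> \<le> ?dist l" for l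
  proof -
    have "\<delta> \<le> (\<Sum>r<?n. \<Sum>c<?n. (matricize N M (A l) $$ (r, c) - matricize N M Astar $$ (r, c))\<^sup>2)"
      using \<delta>[rule_format, OF matricize_carrier[of N M "A l"]] assms(7)[of l]
      unfolding mat_rank_matricize by (simp add: power2_commute)
    then have "\<gamma> * \<delta> \<le> \<gamma> * (\<Sum>r<?n. \<Sum>c<?n.
        (matricize N M (A l) $$ (r, c) - matricize N M Astar $$ (r, c))\<^sup>2)"
      using \<open>\<gamma> > 0\<close> by simp
    with \<gamma>[of "A l" Astar] show ?thesis
      by linarith
  qed
  moreover have "0 < \<gamma> * \<delta> / 2" "\<gamma> * \<delta> / 2 < \<gamma> * \<delta>"
    using \<open>\<gamma> > 0\<close> \<open>\<delta> > 0\<close> by simp_all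
  ultimately show ?thesis
    by (meson order_less_le_trans)
qed

end
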